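(* Let $f(x)=\kappa_1(x)_++\kappa_2(x)_-$ with $\kappa_2>\kappa_1>0$, where $(x)_+=\max(0,x)$ and $(x)_-=\min(0,x)$. For $d_t>0$, a state $s$, a scaled stock $c\in\mathbb{R}$, and a random future return $G_t(s,c)$ (integrable), define $V_t(s,c)\doteq\frac{1}{d_t}\Big(f^{-1}\big(\mathbb{E}[f(d_tc+d_tG_t(s,c))]\big)-d_tc\Big)$, and let $\Lambda=\frac{\kappa_2-\kappa_1}{\kappa_1}>0$. Then $V_t(s,c)\ge\mathbb{E}[G_t(s,c)]-\Lambda\,\mathbb{E}\big[|(c+G_t(s,c))_-|\big]$.
   Context: $f^{-1}$ denotes the inverse of the strictly increasing bijection $f:\mathbb{R}\to\mathbb{R}$. *)

theory Defs
  imports "HOL-Probability.Probability"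
begin

definition pospart :: "real \<Rightarrow> real" where "pospart x = max 0 x"
definition negpart :: "real \<Rightarrow> real" where "negpart x = min 0 x"

definition futil :: "real \<Rightarrow> real \<Rightarrow> real \<Rightarrow> real" where
  "futil k1 k2 x = k1 * pospart x + k2 * negpart x"

definition Vval :: "real \<Rightarrow> real \<Rightarrow> 'a measure \<Rightarrow> ('a \<Rightarrow> real) \<Rightarrow> real \<Rightarrow> real \<Rightarrow> real" where
  "Vval k1 k2 M G d c =
     (1 / d) * (inv (futil k1 k2) (\<integral>\<omega>. futil k1 k2 (d * c + d * G \<omega>) \<partial>M) - d * c)"

end

theory Submission
  imports Defs
begin

text \<open>Write \<open>f x = \<kappa>\<^sub>1 x + (\<kappa>\<^sub>2 - \<kappa>\<^sub>1) (x)\<^sub>-\<close>. Since \<open>x \<mapsto> (x)\<^sub>-\<close> is positively homogeneous,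
  \<open>\<bbbE>[f(d c + d G)] = \<kappa>\<^sub>1 d (c + \<bbbE>[G] - \<Lambda> \<bbbE>[|(c + G)\<^sub>-|])\<close>; and \<open>f z \<le> \<kappa>\<^sub>1 z\<close> with \<open>f\<close>
  strictly increasing gives \<open>f\<^sup>-\<^sup>1(\<kappa>\<^sub>1 z) \<ge> z\<close>.\<close>

lemma negpart_le_0: "negpart x \<le> 0"
  by (simp add: negpart_def)

lemma negpart_mult_nonneg: "0 \<le> d \<Longrightarrow> negpart (d * x) = d * negpart x"
  by (simp add: negpart_def min_mult_distrib_left)

lemma mono_negpart: "mono negpart"
  by (auto simp: mono_def negpart_def)

lemma integrable_negpart: "integrable M X \<Longrightarrow> integrable M (\<lambda>\<omega>. negpart (X \<omega>))"
  by (simp add: negpart_def)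

lemma futil_eq: "futil k1 k2 x = k1 * x + (k2 - k1) * negpart x"
  by (simp add: futil_def pospart_def negpart_def max_def min_def algebra_simps)

lemma futil_le_linear: "k1 \<le> k2 \<Longrightarrow> futil k1 k2 x \<le> k1 * x"
  by (simp add: futil_eq mult_nonneg_nonpos negpart_le_0)

lemma strict_mono_futil:
  assumes "0 < k1" "k1 \<le> k2"
  shows "strict_mono (futil k1 k2)"
proof (rule strict_monoI)
  fix x y :: real
  assume "x < y"
  then have "k1 * x < k1 * y" using \<open>0 < k1\<close> by simp
  moreover have "(k2 - k1) * negpart x \<le> (k2 - k1) * negpart y"
    using \<open>x < y\<close> \<open>k1 \<le> k2\<close> mono_negpart by (simp add: mono_def mult_left_mono)
  ultimately show "futil k1 k2 x < futil k1 k2 y"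
    by (simp add: futil_eq)
qed

lemma surj_futil:
  assumes "0 < k1" "0 < k2"
  shows "surj (futil k1 k2)"
proof (rule surjI)
  fix y :: real
  show "futil k1 k2 (if 0 \<le> y then y / k1 else y / k2) = y"
    using assms by (simp add: futil_def pospart_def negpart_def divide_nonpos_pos)
qed

lemma le_inv_strict_mono:
  fixes f :: "'a::linorder \<Rightarrow> 'b::linorder"
  assumes "strict_mono f" "surj f" "f z \<le> y"
  shows "z \<le> inv f y"
  using assms by (metis strict_mono_less_eq surj_f_inv_f)

lemma le_inv_futil_linear:
  assumes "0 < k1" "k1 < k2"
  shows "z \<le> inv (futil k1 k2) (k1 * z)"
  using assms
  by (intro le_inv_strict_mono strict_mono_futil surj_futil futil_le_linear) simp_all

lemma integral_futil:
  assumes "integrable M X"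
  shows "(\<integral>\<omega>. futil k1 k2 (X \<omega>) \<partial>M)
           = k1 * (\<integral>\<omega>. X \<omega> \<partial>M) + (k2 - k1) * (\<integral>\<omega>. negpart (X \<omega>) \<partial>M)"
  using assms integrable_negpart[OF assms] by (simp add: futil_eq)

theorem mainTheorem6:
  fixes M :: "'a measure" and G :: "'a \<Rightarrow> real" and k1 k2 d c :: real
  assumes "prob_space M" and "integrable M G"
    and "0 < k1" and "k1 < k2" and "0 < d"
  shows "Vval k1 k2 M G d c \<ge>
           (\<integral>\<omega>. G \<omega> \<partial>M) - ((k2 - k1) / k1) * (\<integral>\<omega>. \<bar>negpart (c + G \<omega>)\<bar> \<partial>M)"
proof -
  interpret prob_space M by fact
  define m where "m = (\<integral>\<omega>. G \<omega> \<partial>M)"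
  define n where "n = (\<integral>\<omega>. \<bar>negpart (c + G \<omega>)\<bar> \<partial>M)"
  have n_eq: "n = - (\<integral>\<omega>. negpart (c + G \<omega>) \<partial>M)"
    unfolding n_def using negpart_le_0 by (simp add: abs_of_nonpos)
  have "(\<integral>\<omega>. futil k1 k2 (d * c + d * G \<omega>) \<partial>M)
      = k1 * (\<integral>\<omega>. d * (c + G \<omega>) \<partial>M) + (k2 - k1) * (\<integral>\<omega>. d * negpart (c + G \<omega>) \<partial>M)"
    using integral_futil[of M "\<lambda>\<omega>. d * (c + G \<omega>)"] assms(2,5)
    by (simp add: distrib_left negpart_mult_nonneg[symmetric])
  also have "\<dots> = k1 * (d * c + d * (m - (k2 - k1) / k1 * n))"
    using assms(2,3) integrable_negpart[OF assms(2)]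
    by (simp add: m_def n_eq prob_space field_simps)
  finally have "d * c + d * (m - (k2 - k1) / k1 * n)
      \<le> inv (futil k1 k2) (\<integral>\<omega>. futil k1 k2 (d * c + d * G \<omega>) \<partial>M)"
    using le_inv_futil_linear[OF assms(3,4)] by simp
  then show ?thesis
    unfolding Vval_def m_def[symmetric] n_def[symmetric] using assms(5)
    by (simp add: field_simps)
qed

end
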